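(* Assume the observation space $\mathcal{X}$ is countable. Let $\hat\phi:\mathcal{X}\to[N]$ and $\hat g:[N]\times\mathcal{A}\times\mathcal{X}\to[0,1]$ satisfy \[ \mathbb{E}_{(x,a,x')\sim D}\bigl[\,|\hat g(\hat\phi(x),a,x')-g^{\star}(x,a,x')|\,\bigr]\le\Delta . \] Then \[ \Pr_{x_1,x_2\sim\mu\ \text{i.i.d.}}\bigl(\phi^{\star}(x_1)\ne\phi^{\star}(x_2)\ \wedge\ \hat\phi(x_1)=\hat\phi(x_2)\bigr)\ \le\ \frac{8|\mathcal{A}|^2\Delta}{\Gamma}. \]
   Context: Setting: a block MDP with finite action set $\mathcal{A}$, perfect decoder $\phi^{\star}:\mathcal{X}\to\mathcal{S}$ (emissions of distinct latent states have disjoint supports), first-step latent transition $T(\cdot\mid s,a)$, and initial latent state drawn from a distribution over a set $\mathcal{S}_1$ of $N$ initial states. Write $\mu(x)$ for the probability of the initial observation $x$, $T(x'\mid x,a)$ for the probability of the next observation $x'$ after action $a$ from initial observation $x$ (latent transition from $\phi^{\star}(x)$ times emission of $x'$), and $\rho(x')=\mathbb{E}_{x\sim\mu,a\sim\mathrm{Unif}(\mathcal{A})}[T(x'\mid x,a)]$. Define $D(x,a,x')=\frac{\mu(x)}{2|\mathcal{A}|}\{T(x'\mid x,a)+\rho(x')\}$ (a half-half mixture of real transitions and imposter transitions whose $x'$ is drawn independently) and $g^{\star}(x,a,x')=T(x'\mid x,a)/(T(x'\mid x,a)+\rho(x'))$. Margin assumption: for any two distinct initial states $s,\tilde s\in\mathcal{S}_1$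 and every $a\in\mathcal{A}$, $\|T(\cdot\mid s,a)-T(\cdot\mid\tilde s,a)\|_{\mathrm{TV}}\ge\Gamma$, with $\Gamma>0$. *)

theory Defs
  imports "HOL-Probability.Probability"
begin

text \<open>Latent states of type 's, observations of type 'x,
  actions of the finite type 'a. phi is the perfect decoder, q s is the emission
  distribution of latent state s, T s a the latent transition, p1 the initial latent
  distribution.\<close>

definition tv :: "'s pmf \<Rightarrow> 's pmf \<Rightarrow> real" where
  "tv p p' = (\<Sum>\<^sub>\<infinity>s. \<bar>pmf p s - pmf p' s\<bar>) / 2"

definition mu0 :: "('x \<Rightarrow> 's) \<Rightarrow> 's pmf \<Rightarrow> ('s \<Rightarrow> 'x pmf) \<Rightarrow> 'x \<Rightarrow> real" where
  "mu0 phi p1 q x = pmf p1 (phi x) * pmf (q (phi x)) x"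

definition Tobs :: "('x \<Rightarrow> 's) \<Rightarrow> ('s \<Rightarrow> 'a \<Rightarrow> 's pmf) \<Rightarrow> ('s \<Rightarrow> 'x pmf)
    \<Rightarrow> 'x \<Rightarrow> 'a \<Rightarrow> 'x \<Rightarrow> real" where
  "Tobs phi T q x a x' = pmf (T (phi x) a) (phi x') * pmf (q (phi x')) x'"

definition rho :: "('x \<Rightarrow> 's) \<Rightarrow> 's pmf \<Rightarrow> ('s \<Rightarrow> 'a::finite \<Rightarrow> 's pmf) \<Rightarrow> ('s \<Rightarrow> 'x pmf)
    \<Rightarrow> 'x \<Rightarrow> real" where
  "rho phi p1 T q x' =
     (\<Sum>\<^sub>\<infinity>x. \<Sum>a\<in>UNIV. mu0 phi p1 q x * Tobs phi T q x a x') / real (card (UNIV :: 'a set))"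

definition Dist :: "('x \<Rightarrow> 's) \<Rightarrow> 's pmf \<Rightarrow> ('s \<Rightarrow> 'a::finite \<Rightarrow> 's pmf) \<Rightarrow> ('s \<Rightarrow> 'x pmf)
    \<Rightarrow> 'x \<Rightarrow> 'a \<Rightarrow> 'x \<Rightarrow> real" where
  "Dist phi p1 T q x a x' =
     mu0 phi p1 q x / (2 * real (card (UNIV :: 'a set))) * (Tobs phi T q x a x' + rho phi p1 T q x')"

definition gstar :: "('x \<Rightarrow> 's) \<Rightarrow> 's pmf \<Rightarrow> ('s \<Rightarrow> 'a::finite \<Rightarrow> 's pmf) \<Rightarrow> ('s \<Rightarrow> 'x pmf)
    \<Rightarrow> 'x \<Rightarrow> 'a \<Rightarrow> 'x \<Rightarrow> real" where
  "gstar phi p1 T q x a x' =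
     Tobs phi T q x a x' / (Tobs phi T q x a x' + rho phi p1 T q x')"

end

(* If phihat merges x1 and x2 although their latent states differ, one row h = ghat (phihat x1)
   has to predict both g*(x1,a,.) and g*(x2,a,.).  As g* = T/(T + rho) is an invertible transform
   of T, for rho > 0
     |T1 - T2| <= (T1 + rho) (T2 + rho) / rho * (|h - g*1| + |h - g*2|),
   and summed over x' the left-hand side is at least 2 Gamma by the margin.  Weighting with
   mu(x1) mu(x2) and summing over all pairs, the factor mu(x2) (T2 + rho) / rho sums to at most
   |A| + 1 over x2, while mu(x1) (T1 + rho) = 2 |A| D(x1,a,x').  This gives
   Gamma Pr(merge) <= 2 (|A| + 1) Delta <= 8 |A|^2 Delta.
   All sums are rearranged in ennreal, where Tonelli-type interchanges need no summability. *)

theory Submission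
  imports Defs
begin

(* The library's summable_on_ennreal is stated for ennreal_of_enat (an inserted coercion). *)
lemma ennreal_summable_on [simp]: "(f :: 'a \<Rightarrow> ennreal) summable_on A"
  by (simp add: nonneg_summable_on_complete)

lemma infsum_Sigma_ennreal_finite:
  fixes f :: "'a \<times> 'b \<Rightarrow> ennreal"
  assumes "finite A"
  shows "infsum f (Sigma A B) = (\<Sum>x\<in>A. infsum (\<lambda>y. f (x, y)) (B x))"
  using assms
proof (induction A rule: finite_induct)
  case (insert x A)
  have "Sigma (insert x A) B = Pair x ` B x \<union> Sigma A B"
    by auto
  moreover have "Pair x ` B x \<inter> Sigma A B = {}"
    using insert.hyps by auto
  moreover have "infsum f (Pair x ` B x) = infsum (\<lambda>y. f (x, y)) (B x)"
    by (simp add: infsum_reindex inj_on_def comp_def)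
  ultimately show ?case
    using insert by (simp add: infsum_Un_disjoint)
qed simp

lemma infsum_Sigma_ennreal:
  fixes f :: "'a \<times> 'b \<Rightarrow> ennreal"
  shows "infsum f (Sigma A B) = infsum (\<lambda>x. infsum (\<lambda>y. f (x, y)) (B x)) A"
proof (rule antisym)
  show "infsum f (Sigma A B) \<le> infsum (\<lambda>x. infsum (\<lambda>y. f (x, y)) (B x)) A"
    unfolding nonneg_infsum_complete[of "Sigma A B" f, simplified]
  proof (rule SUP_least, clarify)
    fix F assume F: "finite F" "F \<subseteq> Sigma A B"
    have "sum f F = infsum f F"
      using F by simp
    also have "\<dots> \<le> infsum f (Sigma (fst ` F) B)"
      using F by (intro infsum_mono_neutral) force+
    also have "\<dots> = infsum (\<lambda>x. infsum (\<lambda>y. f (x, y)) (B x)) (fst ` F)"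
      using F by (simp add: infsum_Sigma_ennreal_finite)
    also have "\<dots> \<le> infsum (\<lambda>x. infsum (\<lambda>y. f (x, y)) (B x)) A"
      using F by (intro infsum_mono_neutral) auto
    finally show "sum f F \<le> infsum (\<lambda>x. infsum (\<lambda>y. f (x, y)) (B x)) A" .
  qed
  show "infsum (\<lambda>x. infsum (\<lambda>y. f (x, y)) (B x)) A \<le> infsum f (Sigma A B)"
    unfolding nonneg_infsum_complete[of A "\<lambda>x. infsum (\<lambda>y. f (x, y)) (B x)", simplified]
  proof (rule SUP_least, clarify)
    fix G assume G: "finite G" "G \<subseteq> A"
    then show "(\<Sum>x\<in>G. infsum (\<lambda>y. f (x, y)) (B x)) \<le> infsum f (Sigma A B)"
      by (auto simp flip: infsum_Sigma_ennreal_finite intro!: infsum_mono_neutral)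
  qed
qed

lemma infsum_swap_ennreal:
  fixes f :: "'a \<Rightarrow> 'b \<Rightarrow> ennreal"
  shows "infsum (\<lambda>x. infsum (f x) B) A = infsum (\<lambda>y. infsum (\<lambda>x. f x y) A) B"
proof -
  have "infsum (\<lambda>x. infsum (f x) B) A = infsum (\<lambda>(x, y). f x y) (A \<times> B)"
    by (simp add: infsum_Sigma_ennreal)
  also have "\<dots> = infsum (\<lambda>(y, x). f x y) (B \<times> A)"
    by (subst product_swap[symmetric], subst infsum_reindex) (auto simp: comp_def)
  also have "\<dots> = infsum (\<lambda>y. infsum (\<lambda>x. f x y) A) B"
    by (simp add: infsum_Sigma_ennreal)
  finally show ?thesis .
qed

lemma infsum_UNIV_prod_ennreal:
  fixes f :: "'a \<times> 'b \<Rightarrow> ennreal"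
  shows "infsum f UNIV = (\<Sum>\<^sub>\<infinity>x. \<Sum>\<^sub>\<infinity>y. f (x, y))"
  using infsum_Sigma_ennreal[of f UNIV "\<lambda>_. UNIV"] by simp

lemma infsum_triple_ennreal:
  fixes f :: "'x \<times> 'a::finite \<times> 'y \<Rightarrow> ennreal"
  shows "infsum f UNIV = (\<Sum>\<^sub>\<infinity>x. \<Sum>a\<in>UNIV. \<Sum>\<^sub>\<infinity>y. f (x, a, y))"
  by (simp add: infsum_UNIV_prod_ennreal)

lemma infsum_cmult_right_ennreal:
  fixes f :: "'a \<Rightarrow> ennreal"
  assumes "c \<noteq> \<infinity>"
  shows "infsum (\<lambda>x. c * f x) A = c * infsum f A"
  using infsum_comm_additive_general[where f="\<lambda>y. c * y" and g=f and S=A] assms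
  by (simp add: comp_def sum_distrib_left isCont_def ennreal_tendsto_cmult top.not_eq_extremum)

lemma infsum_sum_ennreal:
  fixes f :: "'a \<Rightarrow> 'b \<Rightarrow> ennreal"
  shows "infsum (\<lambda>x. \<Sum>i\<in>I. f x i) A = (\<Sum>i\<in>I. infsum (\<lambda>x. f x i) A)"
  by (induction I rule: infinite_finite_induct) (simp_all add: infsum_add)

lemma ennreal_infsum:
  fixes f :: "'a \<Rightarrow> real"
  assumes "f summable_on A" and "\<And>x. x \<in> A \<Longrightarrow> f x \<ge> 0"
  shows "ennreal (infsum f A) = infsum (\<lambda>x. ennreal (f x)) A"
  using infsum_comm_additive_general[where f=ennreal and g=f and S=A] assms
  by (simp add: comp_def sum_ennreal subset_iff)

lemma ennreal_infsum_le:
  fixes f :: "'a \<Rightarrow> real"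
  assumes "\<And>x. x \<in> A \<Longrightarrow> f x \<ge> 0"
  shows "ennreal (infsum f A) \<le> infsum (\<lambda>x. ennreal (f x)) A"
  by (cases "f summable_on A") (simp_all add: assms ennreal_infsum infsum_not_exists)

lemma summable_on_if_infsum_ennreal_finite:
  fixes f :: "'a \<Rightarrow> real"
  assumes "\<And>x. x \<in> A \<Longrightarrow> f x \<ge> 0" and "infsum (\<lambda>x. ennreal (f x)) A \<noteq> \<infinity>"
  shows "f summable_on A"
proof (rule nonneg_bdd_above_summable_on)
  show "bdd_above (sum f ` {F. F \<subseteq> A \<and> finite F})"
  proof (rule bdd_aboveI, clarify)
    fix F assume F: "F \<subseteq> A" "finite F"
    then have "ennreal (sum f F) = infsum (\<lambda>x. ennreal (f x)) F"
      using assms(1) by (simp add: subset_iff sum_ennreal)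
    also have "\<dots> \<le> infsum (\<lambda>x. ennreal (f x)) A"
      using F by (intro infsum_mono_neutral) auto
    finally have "enn2real (ennreal (sum f F)) \<le> enn2real (infsum (\<lambda>x. ennreal (f x)) A)"
      using assms(2) by (intro enn2real_mono) (simp_all add: top.not_eq_extremum)
    then show "sum f F \<le> enn2real (infsum (\<lambda>x. ennreal (f x)) A)"
      using F assms(1) by (simp add: subset_iff sum_nonneg)
  qed
qed (use assms in auto)

lemma summable_on_pmf: "pmf p summable_on A"
  by (rule abs_summable_summable) (use abs_summable_equivalent pmf_abs_summable in blast)

lemma infsum_pmf_ennreal: "(\<Sum>\<^sub>\<infinity>x. ennreal (pmf p x)) = 1"
proof -
  have "infsum (pmf p) UNIV = infsetsum (pmf p) UNIV"
    by (rule infsetsum_infsum[symmetric]) (rule pmf_abs_summable)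
  also have "\<dots> = 1"
    by (rule infsetsum_pmf_eq_1) simp
  finally have "infsum (pmf p) UNIV = 1" .
  then show ?thesis
    using ennreal_infsum[where f="pmf p" and A=UNIV, OF summable_on_pmf] by simp
qed

lemma abs_diff_le_ratio_dist:
  fixes t1 t2 r h :: real
  assumes "t1 \<ge> 0" "t2 \<ge> 0" "r > 0"
  shows "\<bar>t1 - t2\<bar> \<le> (t1 + r) * (t2 + r) / r * (\<bar>h - t1 / (t1 + r)\<bar> + \<bar>h - t2 / (t2 + r)\<bar>)"
proof -
  have nz: "t1 + r \<noteq> 0" "t2 + r \<noteq> 0" "r \<noteq> 0"
    using assms by auto
  have "t1 / (t1 + r) - t2 / (t2 + r) = (t1 * (t2 + r) - t2 * (t1 + r)) / ((t1 + r) * (t2 + r))"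
    using nz by (simp add: diff_frac_eq)
  also have "t1 * (t2 + r) - t2 * (t1 + r) = r * (t1 - t2)"
    by (simp add: algebra_simps)
  finally have "t1 - t2 = (t1 + r) * (t2 + r) / r * (t1 / (t1 + r) - t2 / (t2 + r))"
    using nz by simp
  also have "\<bar>\<dots>\<bar> = (t1 + r) * (t2 + r) / r * \<bar>t1 / (t1 + r) - t2 / (t2 + r)\<bar>"
    using assms by (simp add: abs_mult)
  also have "\<dots> \<le> (t1 + r) * (t2 + r) / r * (\<bar>h - t1 / (t1 + r)\<bar> + \<bar>h - t2 / (t2 + r)\<bar>)"
    using assms by (intro mult_left_mono) auto
  finally show ?thesis .
qed

locale block_mdp =
  fixes phi :: "'x \<Rightarrow> 's" and q :: "'s \<Rightarrow> 'x pmf" and T :: "'s \<Rightarrow> 'a::finite \<Rightarrow> 's pmf"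
    and p1 :: "'s pmf"
  assumes decoder: "\<And>s x. x \<in> set_pmf (q s) \<Longrightarrow> phi x = s"
begin

abbreviation "\<mu> \<equiv> mu0 phi p1 q"
abbreviation "P \<equiv> Tobs phi T q"
abbreviation "\<rho> \<equiv> rho phi p1 T q"
abbreviation "D \<equiv> Dist phi p1 T q"
abbreviation "g \<equiv> gstar phi p1 T q"

lemma pmf_bind_emission: "pmf (bind_pmf M q) x = pmf M (phi x) * pmf (q (phi x)) x"
proof -
  have "(\<lambda>s. pmf (q s) x) = (\<lambda>s. indicator {phi x} s * pmf (q (phi x)) x)"
  proof
    fix s
    show "pmf (q s) x = indicator {phi x} s * pmf (q (phi x)) x"
      using decoder[of x s] by (cases "s = phi x") (auto simp: set_pmf_iff indicator_def)
  qed
  then have "pmf (bind_pmf M q) x = measure_pmf.expectation M (\<lambda>s. indicator {phi x} s * pmf (q (phi x)) x)"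
    by (simp add: pmf_bind)
  then show ?thesis
    by (simp add: measure_pmf_single)
qed

lemma mu_eq_pmf: "\<mu> x = pmf (bind_pmf p1 q) x"
  by (simp add: pmf_bind_emission mu0_def)

lemma P_eq_pmf: "P x a x' = pmf (bind_pmf (T (phi x) a) q) x'"
  by (simp add: pmf_bind_emission Tobs_def)

lemma mu_nonneg [simp]: "\<mu> x \<ge> 0"
  by (simp add: mu_eq_pmf)

lemma P_nonneg [simp]: "P x a x' \<ge> 0"
  by (simp add: P_eq_pmf)

lemma infsum_mu_ennreal: "(\<Sum>\<^sub>\<infinity>x. ennreal (\<mu> x)) = 1"
  by (simp add: mu_eq_pmf infsum_pmf_ennreal)

lemma infsum_P_ennreal: "(\<Sum>\<^sub>\<infinity>x'. ennreal (P x a x')) = 1"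
  by (simp add: P_eq_pmf infsum_pmf_ennreal)

lemma ennreal_card_rho:
  "ennreal (CARD('a) * \<rho> x') = (\<Sum>\<^sub>\<infinity>x. \<Sum>a\<in>UNIV. ennreal (\<mu> x * P x a x'))"
proof -
  have "(\<lambda>x. \<Sum>a\<in>UNIV. \<mu> x * P x a x') summable_on UNIV"
  proof (rule summable_on_comparison_test)
    show "(\<lambda>x. CARD('a) * \<mu> x) summable_on UNIV"
      by (simp add: mu_eq_pmf summable_on_cmult_right summable_on_pmf)
    show "(\<Sum>a\<in>UNIV. \<mu> x * P x a x') \<le> CARD('a) * \<mu> x" for x
      using sum_mono[of UNIV "\<lambda>a. \<mu> x * P x a x'" "\<lambda>_. \<mu> x"]
      by (simp add: P_eq_pmf pmf_le_1 mult_left_le)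
  qed (simp add: sum_nonneg)
  then show ?thesis
    by (simp add: rho_def ennreal_infsum sum_nonneg sum_ennreal)
qed

lemma rho_nonneg [simp]: "\<rho> x' \<ge> 0"
  unfolding rho_def by (intro divide_nonneg_nonneg infsum_nonneg sum_nonneg) simp_all

lemma Dist_nonneg [simp]: "D x a x' \<ge> 0"
  by (simp add: Dist_def)

lemma gstar_nonneg: "g x a x' \<ge> 0"
  by (simp add: gstar_def)

lemma gstar_le_1: "g x a x' \<le> 1"
proof (cases "P x a x' + \<rho> x' = 0")
  case False
  then have "P x a x' + \<rho> x' > 0"
    using P_nonneg[of x a x'] rho_nonneg[of x'] by linarith
  then show ?thesis
    by (simp add: gstar_def)
qed (simp add: gstar_def)

lemma infsum_mu_P_le_rho: "(\<Sum>\<^sub>\<infinity>x. ennreal (\<mu> x * P x a x')) \<le> ennreal (CARD('a) * \<rho> x')"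
  unfolding ennreal_card_rho by (intro infsum_mono member_le_sum) simp_all

lemma mu_P_le_rho: "\<mu> x * P x a x' \<le> CARD('a) * \<rho> x'"
proof -
  have "ennreal (\<mu> x * P x a x') = (\<Sum>\<^sub>\<infinity>y\<in>{x}. ennreal (\<mu> y * P y a x'))"
    by simp
  also have "\<dots> \<le> (\<Sum>\<^sub>\<infinity>y. ennreal (\<mu> y * P y a x'))"
    by (intro infsum_mono_neutral) simp_all
  also have "\<dots> \<le> ennreal (CARD('a) * \<rho> x')"
    by (rule infsum_mu_P_le_rho)
  finally show ?thesis
    by (simp add: ennreal_le_iff)
qed

lemma infsum_rho_ennreal: "(\<Sum>\<^sub>\<infinity>x'. ennreal (\<rho> x')) = 1"
proof -
  have "of_nat CARD('a) * (\<Sum>\<^sub>\<infinity>x'. ennreal (\<rho> x'))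
      = (\<Sum>\<^sub>\<infinity>x'. ennreal (CARD('a) * \<rho> x'))"
    by (simp add: infsum_cmult_right_ennreal ennreal_mult ennreal_of_nat_eq_real_of_nat)
  also have "\<dots> = (\<Sum>\<^sub>\<infinity>x'. \<Sum>\<^sub>\<infinity>x. \<Sum>a\<in>UNIV. ennreal (\<mu> x * P x a x'))"
    by (simp only: ennreal_card_rho)
  also have "\<dots> = (\<Sum>\<^sub>\<infinity>x. \<Sum>\<^sub>\<infinity>x'. \<Sum>a\<in>UNIV. ennreal (\<mu> x * P x a x'))"
    by (rule infsum_swap_ennreal)
  also have "\<dots> = (\<Sum>\<^sub>\<infinity>x. \<Sum>a\<in>UNIV. ennreal (\<mu> x) * (\<Sum>\<^sub>\<infinity>x'. ennreal (P x a x')))"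
    by (simp add: infsum_sum_ennreal infsum_cmult_right_ennreal ennreal_mult)
  also have "\<dots> = of_nat CARD('a)"
    by (simp add: infsum_P_ennreal infsum_cmult_right_ennreal infsum_mu_ennreal)
  finally show ?thesis
    using ennreal_mult_cancel_left[of "of_nat CARD('a)" _ 1] by simp
qed

lemma infsum_Dist_ennreal: "(\<Sum>\<^sub>\<infinity>(x, a, x')\<in>UNIV. ennreal (D x a x')) = 1"
proof -
  have "(\<Sum>\<^sub>\<infinity>x'. ennreal (D x a x')) = ennreal (\<mu> x / (2 * CARD('a))) * 2" for x a
  proof -
    have "ennreal (D x a x') = ennreal (\<mu> x / (2 * CARD('a))) * (ennreal (P x a x') + ennreal (\<rho> x'))" for x'
      unfolding Dist_def by (subst ennreal_mult) simp_all
    then show ?thesis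
      by (simp add: infsum_cmult_right_ennreal infsum_add infsum_P_ennreal infsum_rho_ennreal)
  qed
  moreover have "of_nat CARD('a) * (ennreal (\<mu> x / (2 * CARD('a))) * 2) = ennreal (\<mu> x)" for x
    by (simp add: ennreal_of_nat_eq_real_of_nat flip: ennreal_mult ennreal_numeral)
  ultimately show ?thesis
    by (simp add: infsum_triple_ennreal infsum_mu_ennreal)
qed

lemma ennreal_infsum_Dist_mult:
  assumes "\<And>x a x'. 0 \<le> e x a x'" and "\<And>x a x'. e x a x' \<le> 1"
  shows "ennreal (\<Sum>\<^sub>\<infinity>(x, a, x')\<in>UNIV. D x a x' * e x a x')
           = (\<Sum>\<^sub>\<infinity>(x, a, x')\<in>UNIV. ennreal (D x a x' * e x a x'))"
proof -
  let ?f = "\<lambda>(x, a, x'). D x a x' * e x a x'"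
  have "(\<Sum>\<^sub>\<infinity>p. ennreal (?f p)) \<le> (\<Sum>\<^sub>\<infinity>(x, a, x')\<in>UNIV. ennreal (D x a x'))"
    using assms by (intro infsum_mono) (auto intro!: ennreal_leI mult_left_le)
  then have "?f summable_on UNIV"
    using assms infsum_Dist_ennreal by (intro summable_on_if_infsum_ennreal_finite) (auto simp: top_unique)
  then have "ennreal (infsum ?f UNIV) = (\<Sum>\<^sub>\<infinity>p. ennreal (?f p))"
    using assms by (intro ennreal_infsum) auto
  also have "\<dots> = (\<Sum>\<^sub>\<infinity>(x, a, x')\<in>UNIV. ennreal (D x a x' * e x a x'))"
    by (rule infsum_cong) auto
  finally show ?thesis .
qed

lemma infsum_Dist_mult_nonneg:
  assumes "\<And>x a x'. 0 \<le> e x a x'"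
  shows "0 \<le> (\<Sum>\<^sub>\<infinity>(x, a, x')\<in>UNIV. D x a x' * e x a x')"
  using assms by (intro infsum_nonneg) (simp split: prod.splits)

definition weight :: "'x \<Rightarrow> 'a \<Rightarrow> 'x \<Rightarrow> real" where
  "weight x a x' = \<mu> x * (P x a x' + \<rho> x')"

lemma weight_nonneg [simp]: "weight x a x' \<ge> 0"
  by (simp add: weight_def)

lemma weight_eq_Dist: "weight x a x' = 2 * CARD('a) * D x a x'"
  by (simp add: weight_def Dist_def)

lemma infsum_weight_div_rho_le: "(\<Sum>\<^sub>\<infinity>x. ennreal (weight x a x' / \<rho> x')) \<le> ennreal (CARD('a) + 1)"
proof (cases "\<rho> x' = 0")
  case False
  then have r: "\<rho> x' > 0"
    using rho_nonneg[of x'] by linarith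
  have "ennreal (weight x a x' / \<rho> x') = ennreal (1 / \<rho> x') * ennreal (\<mu> x * P x a x') + ennreal (\<mu> x)" for x
  proof -
    have "ennreal (weight x a x' / \<rho> x') = ennreal (1 / \<rho> x' * (\<mu> x * P x a x')) + ennreal (\<mu> x)"
      using r by (simp add: weight_def field_simps flip: ennreal_plus)
    also have "ennreal (1 / \<rho> x' * (\<mu> x * P x a x')) = ennreal (1 / \<rho> x') * ennreal (\<mu> x * P x a x')"
      using r by (subst ennreal_mult) simp_all
    finally show ?thesis .
  qed
  then have "(\<Sum>\<^sub>\<infinity>x. ennreal (weight x a x' / \<rho> x'))
      = ennreal (1 / \<rho> x') * (\<Sum>\<^sub>\<infinity>x. ennreal (\<mu> x * P x a x')) + 1"
    by (simp add: infsum_add infsum_cmult_right_ennreal infsum_mu_ennreal)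
  also have "\<dots> \<le> ennreal (1 / \<rho> x') * ennreal (CARD('a) * \<rho> x') + 1"
    by (intro add_right_mono mult_left_mono infsum_mu_P_le_rho) simp
  also have "\<dots> = ennreal (CARD('a) + 1)"
    using r by (simp flip: ennreal_mult)
  finally show ?thesis .
qed simp

lemma tv_le_infsum_P_diff:
  "ennreal (2 * tv (T (phi x1) a) (T (phi x2) a)) \<le> (\<Sum>\<^sub>\<infinity>x'. ennreal \<bar>P x1 a x' - P x2 a x'\<bar>)"
proof -
  define d where "d s = \<bar>pmf (T (phi x1) a) s - pmf (T (phi x2) a) s\<bar>" for s
  have "ennreal (2 * tv (T (phi x1) a) (T (phi x2) a)) \<le> (\<Sum>\<^sub>\<infinity>s. ennreal (d s))"
    unfolding tv_def d_def by (simp add: ennreal_infsum_le)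
  also have "\<dots> = (\<Sum>\<^sub>\<infinity>s. \<Sum>\<^sub>\<infinity>x'. ennreal (d s) * ennreal (pmf (q s) x'))"
    by (simp add: infsum_cmult_right_ennreal infsum_pmf_ennreal)
  also have "\<dots> = (\<Sum>\<^sub>\<infinity>x'. \<Sum>\<^sub>\<infinity>s. ennreal (d s) * ennreal (pmf (q s) x'))"
    by (rule infsum_swap_ennreal)
  also have "\<dots> = (\<Sum>\<^sub>\<infinity>x'. ennreal \<bar>P x1 a x' - P x2 a x'\<bar>)"
  proof (rule infsum_cong)
    fix x'
    have "(\<Sum>\<^sub>\<infinity>s. ennreal (d s) * ennreal (pmf (q s) x'))
        = (\<Sum>\<^sub>\<infinity>s\<in>{phi x'}. ennreal (d s) * ennreal (pmf (q s) x'))"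
      using decoder[of x'] by (intro infsum_cong_neutral) (auto simp: set_pmf_iff)
    also have "\<dots> = ennreal \<bar>P x1 a x' - P x2 a x'\<bar>"
      by (simp add: d_def Tobs_def abs_mult ennreal_mult flip: left_diff_distrib)
    finally show "(\<Sum>\<^sub>\<infinity>s. ennreal (d s) * ennreal (pmf (q s) x')) = ennreal \<bar>P x1 a x' - P x2 a x'\<bar>" .
  qed
  finally show ?thesis .
qed

lemma mu_mu_P_diff_le:
  "\<mu> x1 * \<mu> x2 * \<bar>P x1 a x' - P x2 a x'\<bar>
     \<le> weight x1 a x' * weight x2 a x' / \<rho> x' * (\<bar>h - g x1 a x'\<bar> + \<bar>h - g x2 a x'\<bar>)"
proof (cases "\<rho> x' = 0")
  case True
  \<comment> \<open>Then the right-hand side is 0 by division by zero, and so is every \<open>\<mu> x * P x a x'\<close>.\<close>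
  have zero: "\<mu> x * P x a x' = 0" for x
    using mu_P_le_rho[of x a x'] True by (intro order_antisym) simp_all
  have "\<mu> x1 * \<mu> x2 * \<bar>P x1 a x' - P x2 a x'\<bar> \<le> \<mu> x1 * \<mu> x2 * (P x1 a x' + P x2 a x')"
    using P_nonneg[of x1 a x'] P_nonneg[of x2 a x'] by (intro mult_left_mono) (arith, simp)
  also have "\<dots> = \<mu> x2 * (\<mu> x1 * P x1 a x') + \<mu> x1 * (\<mu> x2 * P x2 a x')"
    by (simp add: algebra_simps)
  also have "\<dots> = 0"
    unfolding zero by simp
  finally show ?thesis
    using True by simp
next
  case False
  then have "\<rho> x' > 0"
    using rho_nonneg[of x'] by linarith
  then have "\<bar>P x1 a x' - P x2 a x'\<bar> \<le> (P x1 a x' + \<rho> x') * (P x2 a x' + \<rho> x') / \<rho> x' *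
      (\<bar>h - g x1 a x'\<bar> + \<bar>h - g x2 a x'\<bar>)"
    unfolding gstar_def by (intro abs_diff_le_ratio_dist) simp_all
  then have "\<mu> x1 * \<mu> x2 * \<bar>P x1 a x' - P x2 a x'\<bar>
      \<le> \<mu> x1 * \<mu> x2 * ((P x1 a x' + \<rho> x') * (P x2 a x' + \<rho> x') / \<rho> x' *
          (\<bar>h - g x1 a x'\<bar> + \<bar>h - g x2 a x'\<bar>))"
    by (rule mult_left_mono) simp
  then show ?thesis
    by (simp add: weight_def mult_ac)
qed

lemma mu_mu_tv_le_infsum_weight:
  "ennreal (\<mu> x1 * \<mu> x2 * (2 * tv (T (phi x1) a) (T (phi x2) a)))
     \<le> (\<Sum>\<^sub>\<infinity>x'. ennreal (weight x1 a x' * weight x2 a x' / \<rho> x' *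
                           (\<bar>h x' - g x1 a x'\<bar> + \<bar>h x' - g x2 a x'\<bar>)))"
proof -
  have "ennreal (\<mu> x1 * \<mu> x2 * (2 * tv (T (phi x1) a) (T (phi x2) a)))
      = ennreal (\<mu> x1 * \<mu> x2) * ennreal (2 * tv (T (phi x1) a) (T (phi x2) a))"
    by (simp add: ennreal_mult')
  also have "\<dots> \<le> ennreal (\<mu> x1 * \<mu> x2) * (\<Sum>\<^sub>\<infinity>x'. ennreal \<bar>P x1 a x' - P x2 a x'\<bar>)"
    by (intro mult_left_mono tv_le_infsum_P_diff) simp
  also have "\<dots> = (\<Sum>\<^sub>\<infinity>x'. ennreal (\<mu> x1 * \<mu> x2 * \<bar>P x1 a x' - P x2 a x'\<bar>))"
    by (subst infsum_cmult_right_ennreal[symmetric]) (simp_all add: ennreal_mult ennreal_mult_eq_top_iff)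
  also have "\<dots> \<le> (\<Sum>\<^sub>\<infinity>x'. ennreal (weight x1 a x' * weight x2 a x' / \<rho> x' *
                           (\<bar>h x' - g x1 a x'\<bar> + \<bar>h x' - g x2 a x'\<bar>)))"
    by (intro infsum_mono ennreal_leI mu_mu_P_diff_le) simp_all
  finally show ?thesis .
qed

definition cross_error :: "('x \<Rightarrow> 'a \<Rightarrow> 'x \<Rightarrow> real) \<Rightarrow> 'x \<Rightarrow> 'x \<Rightarrow> ennreal" where
  "cross_error f x1 x2 =
     (\<Sum>a\<in>UNIV. \<Sum>\<^sub>\<infinity>x'. ennreal (weight x1 a x' * weight x2 a x' / \<rho> x' * \<bar>f x1 a x' - g x1 a x'\<bar>))"

lemma merged_pair_le_cross_error:
  assumes "f x1 = f x2" and "\<And>a. \<Gamma> \<le> tv (T (phi x1) a) (T (phi x2) a)"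
  shows "of_nat CARD('a) * ennreal (2 * \<Gamma>) * ennreal (\<mu> x1 * \<mu> x2) \<le> cross_error f x1 x2 + cross_error f x2 x1"
proof -
  have "ennreal (\<mu> x1 * \<mu> x2 * (2 * \<Gamma>)) = ennreal (2 * \<Gamma>) * ennreal (\<mu> x1 * \<mu> x2)"
    by (subst ennreal_mult') (simp_all add: mult.commute)
  then have "of_nat CARD('a) * ennreal (2 * \<Gamma>) * ennreal (\<mu> x1 * \<mu> x2)
      = (\<Sum>a\<in>(UNIV :: 'a set). ennreal (\<mu> x1 * \<mu> x2 * (2 * \<Gamma>)))"
    by (simp add: mult.assoc)
  also have "\<dots> \<le> (\<Sum>a\<in>UNIV. ennreal (\<mu> x1 * \<mu> x2 * (2 * tv (T (phi x1) a) (T (phi x2) a))))"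
    using assms(2) by (intro sum_mono ennreal_leI mult_left_mono) simp_all
  also have "\<dots> \<le> (\<Sum>a\<in>UNIV. \<Sum>\<^sub>\<infinity>x'. ennreal (weight x1 a x' * weight x2 a x' / \<rho> x' *
                           (\<bar>f x1 a x' - g x1 a x'\<bar> + \<bar>f x1 a x' - g x2 a x'\<bar>)))"
    by (intro sum_mono mu_mu_tv_le_infsum_weight)
  also have "\<dots> = cross_error f x1 x2 + cross_error f x2 x1"
    by (simp add: cross_error_def assms(1) distrib_left mult.commute[of "weight x1 _ _"]
        infsum_add sum.distrib)
  finally show ?thesis .
qed

lemma infsum_cross_error_right_le:
  "(\<Sum>\<^sub>\<infinity>x2. cross_error f x1 x2)
     \<le> ennreal (2 * CARD('a) * (CARD('a) + 1)) *
       (\<Sum>a\<in>UNIV. \<Sum>\<^sub>\<infinity>x'. ennreal (D x1 a x' * \<bar>f x1 a x' - g x1 a x'\<bar>))"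
proof -
  let ?we = "\<lambda>a x'. weight x1 a x' * \<bar>f x1 a x' - g x1 a x'\<bar>"
  have "ennreal (weight x1 a x' * weight x2 a x' / \<rho> x' * \<bar>f x1 a x' - g x1 a x'\<bar>)
      = ennreal (?we a x') * ennreal (weight x2 a x' / \<rho> x')" for a x' x2
    by (simp add: mult_ac flip: ennreal_mult)
  then have "(\<Sum>\<^sub>\<infinity>x2. cross_error f x1 x2)
      = (\<Sum>a\<in>UNIV. \<Sum>\<^sub>\<infinity>x'. ennreal (?we a x') * (\<Sum>\<^sub>\<infinity>x2. ennreal (weight x2 a x' / \<rho> x')))"
    unfolding cross_error_def
    by (simp add: infsum_sum_ennreal infsum_cmult_right_ennreal infsum_swap_ennreal[where A=UNIV and B=UNIV])
  also have "\<dots> \<le> (\<Sum>a\<in>UNIV. \<Sum>\<^sub>\<infinity>x'. ennreal (?we a x') * ennreal (CARD('a) + 1))"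
    by (intro sum_mono infsum_mono mult_left_mono infsum_weight_div_rho_le) simp_all
  also have "\<dots> = (\<Sum>a\<in>UNIV. \<Sum>\<^sub>\<infinity>x'. ennreal (?we a x' * (CARD('a) + 1)))"
    by (intro sum.cong infsum_cong refl ennreal_mult[symmetric]) simp_all
  also have "\<dots> = ennreal (2 * CARD('a) * (CARD('a) + 1)) *
      (\<Sum>a\<in>UNIV. \<Sum>\<^sub>\<infinity>x'. ennreal (D x1 a x' * \<bar>f x1 a x' - g x1 a x'\<bar>))"
  proof -
    have "ennreal (?we a x' * (CARD('a) + 1))
        = ennreal (2 * CARD('a) * (CARD('a) + 1)) * ennreal (D x1 a x' * \<bar>f x1 a x' - g x1 a x'\<bar>)" for a x'
      by (subst ennreal_mult[symmetric]) (simp_all add: weight_eq_Dist algebra_simps)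
    then show ?thesis
      by (simp add: sum_distrib_left infsum_cmult_right_ennreal)
  qed
  finally show ?thesis .
qed

lemma infsum_cross_error_le:
  "(\<Sum>\<^sub>\<infinity>x1. \<Sum>\<^sub>\<infinity>x2. cross_error f x1 x2)
     \<le> ennreal (2 * CARD('a) * (CARD('a) + 1)) *
       (\<Sum>\<^sub>\<infinity>(x, a, x')\<in>UNIV. ennreal (D x a x' * \<bar>f x a x' - g x a x'\<bar>))"
proof -
  have "(\<Sum>\<^sub>\<infinity>x1. \<Sum>\<^sub>\<infinity>x2. cross_error f x1 x2)
      \<le> (\<Sum>\<^sub>\<infinity>x1. ennreal (2 * CARD('a) * (CARD('a) + 1)) *
            (\<Sum>a\<in>UNIV. \<Sum>\<^sub>\<infinity>x'. ennreal (D x1 a x' * \<bar>f x1 a x' - g x1 a x'\<bar>)))"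
    by (rule infsum_mono[OF _ _ infsum_cross_error_right_le]) simp_all
  then show ?thesis
    by (simp add: infsum_cmult_right_ennreal infsum_triple_ennreal)
qed

lemma infsum_merged_pairs_le:
  fixes phihat :: "'x \<Rightarrow> 'i" and ghat :: "'i \<Rightarrow> 'a \<Rightarrow> 'x \<Rightarrow> real"
  assumes margin: "\<And>s s' a. s \<in> set_pmf p1 \<Longrightarrow> s' \<in> set_pmf p1 \<Longrightarrow> s \<noteq> s' \<Longrightarrow> \<Gamma> \<le> tv (T s a) (T s' a)"
  shows "of_nat CARD('a) * ennreal (2 * \<Gamma>) *
           (\<Sum>\<^sub>\<infinity>(x1, x2)\<in>UNIV. ennreal (if phi x1 \<noteq> phi x2 \<and> phihat x1 = phihat x2 then \<mu> x1 * \<mu> x2 else 0))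
         \<le> ennreal (4 * CARD('a) * (CARD('a) + 1)) *
           (\<Sum>\<^sub>\<infinity>(x, a, x')\<in>UNIV. ennreal (D x a x' * \<bar>ghat (phihat x) a x' - g x a x'\<bar>))"
    (is "?lhs \<le> ?rhs")
proof -
  let ?f = "\<lambda>x. ghat (phihat x)"
  let ?merged = "\<lambda>x1 x2. phi x1 \<noteq> phi x2 \<and> phihat x1 = phihat x2"
  have pair: "of_nat CARD('a) * ennreal (2 * \<Gamma>) * ennreal (if ?merged x1 x2 then \<mu> x1 * \<mu> x2 else 0)
      \<le> cross_error ?f x1 x2 + cross_error ?f x2 x1" for x1 x2
  proof (cases "?merged x1 x2 \<and> \<mu> x1 \<noteq> 0 \<and> \<mu> x2 \<noteq> 0")
    case True
    then have "phi x1 \<in> set_pmf p1" "phi x2 \<in> set_pmf p1"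
      by (auto simp: mu0_def set_pmf_iff)
    then have "of_nat CARD('a) * ennreal (2 * \<Gamma>) * ennreal (\<mu> x1 * \<mu> x2)
        \<le> cross_error ?f x1 x2 + cross_error ?f x2 x1"
      using True by (intro merged_pair_le_cross_error margin) auto
    then show ?thesis
      using True by simp
  qed auto
  have "?lhs = (\<Sum>\<^sub>\<infinity>x1. \<Sum>\<^sub>\<infinity>x2.
      of_nat CARD('a) * ennreal (2 * \<Gamma>) * ennreal (if ?merged x1 x2 then \<mu> x1 * \<mu> x2 else 0))"
    by (subst infsum_UNIV_prod_ennreal) (simp add: infsum_cmult_right_ennreal ennreal_mult_eq_top_iff)
  also have "\<dots> \<le> (\<Sum>\<^sub>\<infinity>x1. \<Sum>\<^sub>\<infinity>x2. cross_error ?f x1 x2 + cross_error ?f x2 x1)"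
    by (intro infsum_mono pair) simp_all
  also have "\<dots> = 2 * (\<Sum>\<^sub>\<infinity>x1. \<Sum>\<^sub>\<infinity>x2. cross_error ?f x1 x2)"
    by (simp add: infsum_add mult_2 infsum_swap_ennreal[of "\<lambda>x1 x2. cross_error ?f x2 x1"])
  also have "\<dots> \<le> 2 * (ennreal (2 * CARD('a) * (CARD('a) + 1)) *
      (\<Sum>\<^sub>\<infinity>(x, a, x')\<in>UNIV. ennreal (D x a x' * \<bar>ghat (phihat x) a x' - g x a x'\<bar>)))"
    by (intro mult_left_mono infsum_cross_error_le) simp
  also have "\<dots> = ?rhs"
  proof -
    have "2 * ennreal (2 * CARD('a) * (CARD('a) + 1)) = ennreal (4 * CARD('a) * (CARD('a) + 1))"
      by (subst ennreal_numeral[symmetric], subst ennreal_mult[symmetric]) simp_all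
    then show ?thesis
      by (simp only: mult.assoc[symmetric])
  qed
  finally show ?thesis .
qed

lemma merged_mass_le:
  fixes phihat :: "'x \<Rightarrow> 'i" and ghat :: "'i \<Rightarrow> 'a \<Rightarrow> 'x \<Rightarrow> real" and \<Gamma> \<Delta> :: real
  assumes margin: "\<And>s s' a. s \<in> set_pmf p1 \<Longrightarrow> s' \<in> set_pmf p1 \<Longrightarrow> s \<noteq> s' \<Longrightarrow> \<Gamma> \<le> tv (T s a) (T s' a)"
    and Gamma_pos: "\<Gamma> > 0"
    and ghat_range: "\<And>i a x'. ghat i a x' \<in> {0..1}"
    and err: "(\<Sum>\<^sub>\<infinity>(x, a, x')\<in>UNIV. D x a x' * \<bar>ghat (phihat x) a x' - g x a x'\<bar>) \<le> \<Delta>"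
  shows "(\<Sum>\<^sub>\<infinity>(x1, x2)\<in>UNIV. if phi x1 \<noteq> phi x2 \<and> phihat x1 = phihat x2 then \<mu> x1 * \<mu> x2 else 0)
           \<le> 2 * (real CARD('a) + 1) * \<Delta> / \<Gamma>"
    (is "?L \<le> _")
proof -
  have "\<bar>ghat (phihat x) a x' - g x a x'\<bar> \<le> 1" for x a x'
    using ghat_range[of "phihat x" a x'] gstar_nonneg[of x a x'] gstar_le_1[of x a x'] by auto
  then have err_ennreal:
    "(\<Sum>\<^sub>\<infinity>(x, a, x')\<in>UNIV. ennreal (D x a x' * \<bar>ghat (phihat x) a x' - g x a x'\<bar>)) \<le> ennreal \<Delta>"
    using err by (simp add: ennreal_leI flip: ennreal_infsum_Dist_mult)
  have "0 \<le> \<Delta>"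
    using order_trans[OF infsum_Dist_mult_nonneg err] by simp
  have "0 \<le> ?L"
    by (intro infsum_nonneg) auto
  then have "ennreal (CARD('a) * (2 * \<Gamma>) * ?L) = of_nat CARD('a) * ennreal (2 * \<Gamma>) * ennreal ?L"
    using Gamma_pos by (simp add: ennreal_mult ennreal_of_nat_eq_real_of_nat)
  also have "\<dots> \<le> of_nat CARD('a) * ennreal (2 * \<Gamma>) *
      (\<Sum>\<^sub>\<infinity>(x1, x2)\<in>UNIV. ennreal (if phi x1 \<noteq> phi x2 \<and> phihat x1 = phihat x2 then \<mu> x1 * \<mu> x2 else 0))"
    using ennreal_infsum_le[of UNIV "\<lambda>(x1, x2). if phi x1 \<noteq> phi x2 \<and> phihat x1 = phihat x2 then \<mu> x1 * \<mu> x2 else 0"]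
    by (intro mult_left_mono) (simp_all add: prod.case_distrib[of ennreal] split: prod.splits)
  also have "\<dots> \<le> ennreal (4 * CARD('a) * (CARD('a) + 1)) * ennreal \<Delta>"
    using infsum_merged_pairs_le[OF margin] err_ennreal by (rule order_trans[OF _ mult_left_mono]) simp_all
  also have "\<dots> = ennreal (4 * CARD('a) * (CARD('a) + 1) * \<Delta>)"
    using \<open>0 \<le> \<Delta>\<close> by (simp add: ennreal_mult)
  finally have "CARD('a) * (2 * \<Gamma>) * ?L \<le> 4 * CARD('a) * (CARD('a) + 1) * \<Delta>"
    using \<open>0 \<le> \<Delta>\<close> by (subst (asm) ennreal_le_iff) simp_all
  then have "2 * real CARD('a) * (\<Gamma> * ?L) \<le> 2 * real CARD('a) * (2 * (real CARD('a) + 1) * \<Delta>)"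
    by (simp add: algebra_simps)
  then have "\<Gamma> * ?L \<le> 2 * (real CARD('a) + 1) * \<Delta>"
    by (rule mult_left_le_imp_le) simp
  then show ?thesis
    using Gamma_pos by (simp add: pos_le_divide_eq mult.commute)
qed

end

theorem lemma10:
  fixes phi :: "'x::countable \<Rightarrow> 's"
    and q :: "'s \<Rightarrow> 'x pmf"
    and T :: "'s \<Rightarrow> 'a::finite \<Rightarrow> 's pmf"
    and p1 :: "'s pmf"
    and S1 :: "'s set"
    and N :: nat
    and Gamma Delta :: real
    and phihat :: "'x \<Rightarrow> nat"
    and ghat :: "nat \<Rightarrow> 'a \<Rightarrow> 'x \<Rightarrow> real"
  assumes decoder: "\<And>s x. x \<in> set_pmf (q s) \<Longrightarrow> phi x = s"
    and S1_fin: "finite S1" and N_def: "N = card S1"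
    and init: "set_pmf p1 \<subseteq> S1"
    and Gamma_pos: "Gamma > 0"
    and margin: "\<And>s s' a. s \<in> S1 \<Longrightarrow> s' \<in> S1 \<Longrightarrow> s \<noteq> s' \<Longrightarrow> tv (T s a) (T s' a) \<ge> Gamma"
    and phihat_range: "\<And>x. phihat x \<in> {1..N}"
    and ghat_range: "\<And>i a x'. ghat i a x' \<in> {0..1}"
    and err: "(\<Sum>\<^sub>\<infinity>(x, a, x') \<in> UNIV. Dist phi p1 T q x a x' *
                 \<bar>ghat (phihat x) a x' - gstar phi p1 T q x a x'\<bar>) \<le> Delta"
  shows "(\<Sum>\<^sub>\<infinity>(x1, x2) \<in> UNIV. if phi x1 \<noteq> phi x2 \<and> phihat x1 = phihat x2
            then mu0 phi p1 q x1 * mu0 phi p1 q x2 else 0)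
         \<le> 8 * real (card (UNIV :: 'a set)) ^ 2 * Delta / Gamma"
proof -
  interpret block_mdp phi q T p1
    by unfold_locales (rule decoder)
  have "0 \<le> Delta"
    using order_trans[OF infsum_Dist_mult_nonneg err] by simp
  have "(\<Sum>\<^sub>\<infinity>(x1, x2) \<in> UNIV. if phi x1 \<noteq> phi x2 \<and> phihat x1 = phihat x2
            then mu0 phi p1 q x1 * mu0 phi p1 q x2 else 0)
         \<le> 2 * (real CARD('a) + 1) * Delta / Gamma"
    using init
    by (intro merged_mass_le[where phihat = phihat and ghat = ghat, OF _ Gamma_pos ghat_range err]
        margin) auto
  also have "\<dots> \<le> 8 * real CARD('a) ^ 2 * Delta / Gamma"
  proof -
    have "2 * (A + 1) \<le> 8 * A ^ 2" if "1 \<le> A" for A :: real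
    proof -
      have "A * 1 \<le> A * A"
        using that by (intro mult_left_mono) simp_all
      then show ?thesis
        using that unfolding power2_eq_square by (smt (verit))
    qed
    then have "2 * (real CARD('a) + 1) \<le> 8 * real CARD('a) ^ 2"
      by simp
    then show ?thesis
      using \<open>0 \<le> Delta\<close> Gamma_pos by (intro divide_right_mono mult_right_mono) simp_all
  qed
  finally show ?thesis .
qed

end
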